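(* Let $G$ be a signed graph and $H$ a facet subgraph of $G$. Then exactly one component $G_1$ of $G$ is not a component of $H$ (i.e. all edges of $G\setminus H$ lie in $G_1$, and every component of $G$ other than $G_1$ is a component of $H$). Moreover, if the vertex set of $G_1$ is the union of the vertex sets of exactly two components $H_1,H_2$ of $H$, where $H_1$ is a bipartite component of $H$ that is not a component of $G$, then $G_1$ is bipartite if and only if $H_2$ is bipartite.
   Context: A signed graph $G$ on vertex set $\{1,\dots,n\}$ is a finite undirected graph, possibly with loops but without multiple edges, together with a sign function $\mathrm{sgn}:E(G)\to\{+1,-1\}$; an edge $ij$ of sign $\pm1$ is written $\pm ij$. Subgraphs are spanning: a subgraph $H$ of $G$ has vertex set $\{1,\dots,n\}$ and a subset of the edges of $G$ with the same signs; $G\setminus H$ denotes the set of edges of $G$ not in $H$. A component is a maximal connected subgraph (an isolated vertex is a component). A component is bipartite if its vertex set can be partitioned into sets $L,R$ (one possibly empty) with every edge of the component having exactly one endpoint in each (a component with a loop is not bipartite). $\mathrm{bicomp}(\cdot)$ is the number of bipartite components. A subgraph $H$ of $G$ is a facet subgraph if (1) $\mathrm{bicomp}(H)=\mathrm{bicomp}(G)+1$, and (2) for any bipartite component $H'$ of $H$ which is not a component of $G$, there is a bipartition $V(H')=L\cup R$ such that every edge $e\in G\setminus H$ is either a positive edge with at least one endpoint in $L$ and no endpoint in $R$, or a negative edge with at least one endpoint in $R$ and no endpoint in $L$. *)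

theory Defs
  imports Main
begin

text \<open>A signed graph on vertex set {1..n}: a set of signed edges (e, s), where e is an
  unordered pair of vertices given as a set of card 1 (loop) or 2, and s is the sign +1 or -1.
  No multiple edges: each vertex set e carries at most one sign.\<close>

type_synonym sedge = "nat set \<times> int"

definition signed_graph :: "nat \<Rightarrow> sedge set \<Rightarrow> bool" where
  "signed_graph n G \<longleftrightarrow>
     (\<forall>(e, s) \<in> G. e \<subseteq> {1..n} \<and> (card e = 1 \<or> card e = 2) \<and> (s = 1 \<or> s = -1)) \<and>
     (\<forall>e s s'. (e, s) \<in> G \<longrightarrow> (e, s') \<in> G \<longrightarrow> s = s')"

definition adj :: "sedge set \<Rightarrow> (nat \<times> nat) set" where
  "adj G = {(u, v). \<exists>s. ({u, v}, s) \<in> G}"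

text \<open>Vertex sets of the components of G (isolated vertices are components).\<close>
definition comps :: "nat \<Rightarrow> sedge set \<Rightarrow> nat set set" where
  "comps n G = {C. \<exists>v \<in> {1..n}. C = {w \<in> {1..n}. (v, w) \<in> (adj G)\<^sup>*}}"

definition edges_in :: "sedge set \<Rightarrow> nat set \<Rightarrow> sedge set" where
  "edges_in G C = {(e, s) \<in> G. e \<subseteq> C}"

definition comp_is_comp_of :: "nat \<Rightarrow> sedge set \<Rightarrow> nat set \<Rightarrow> sedge set \<Rightarrow> bool" where
  "comp_is_comp_of n A C B \<longleftrightarrow> C \<in> comps n B \<and> edges_in B C = edges_in A C"

definition is_bipartition :: "sedge set \<Rightarrow> nat set \<Rightarrow> nat set \<Rightarrow> nat set \<Rightarrow> bool" where
  "is_bipartition G C L R \<longleftrightarrow> L \<union> R = C \<and> L \<inter> R = {} \<and>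
     (\<forall>(e, s) \<in> edges_in G C. card (e \<inter> L) = 1 \<and> card (e \<inter> R) = 1)"

definition bip_comp :: "sedge set \<Rightarrow> nat set \<Rightarrow> bool" where
  "bip_comp G C \<longleftrightarrow> (\<exists>L R. is_bipartition G C L R)"

definition bicomp :: "nat \<Rightarrow> sedge set \<Rightarrow> nat" where
  "bicomp n G = card {C \<in> comps n G. bip_comp G C}"

definition facet_subgraph :: "nat \<Rightarrow> sedge set \<Rightarrow> sedge set \<Rightarrow> bool" where
  "facet_subgraph n G H \<longleftrightarrow> H \<subseteq> G \<and>
     bicomp n H = bicomp n G + 1 \<and>
     (\<forall>C \<in> comps n H. bip_comp H C \<and> \<not> comp_is_comp_of n H C G \<longrightarrow>
        (\<exists>L R. is_bipartition H C L R \<and>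
           (\<forall>(e, s) \<in> G - H.
              (s = 1 \<and> e \<inter> L \<noteq> {} \<and> e \<inter> R = {}) \<or>
              (s = -1 \<and> e \<inter> R \<noteq> {} \<and> e \<inter> L = {}))))"

end

theory Submission
  imports Defs
begin

text \<open>Call a component of \<open>G\<close> changed if it is not a component of \<open>H\<close>, and let \<open>X\<close> (resp. \<open>Y\<close>)
  be the bipartite components of \<open>H\<close> not in \<open>G\<close> (resp. of \<open>G\<close> not in \<open>H\<close>). The bipartite
  components common to \<open>G\<close> and \<open>H\<close> are the same, so \<open>bicomp H = bicomp G + 1\<close> gives
  \<open>|X| = |Y| + 1\<close>; in particular \<open>X\<close> contains some \<open>D\<close>. By the facet condition every edge of
  \<open>G - H\<close> meets \<open>D\<close>, and a component of \<open>G\<close> is changed exactly when it contains an edge of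
  \<open>G - H\<close>; hence every changed component meets \<open>D\<close> and is the component of \<open>G\<close> containing \<open>D\<close>.
  If the changed component \<open>G\<^sub>1\<close> splits into \<open>H\<^sub>1 \<in> X\<close> and \<open>H\<^sub>2\<close>, then \<open>X\<close> is \<open>{H\<^sub>1}\<close> or
  \<open>{H\<^sub>1, H\<^sub>2}\<close> according as \<open>H\<^sub>2\<close> is bipartite, while \<open>Y\<close> is \<open>{}\<close> or \<open>{G\<^sub>1}\<close> according as \<open>G\<^sub>1\<close>
  is bipartite; \<open>|X| = |Y| + 1\<close> forces the two alternatives to match.\<close>

definition comp_of :: "nat \<Rightarrow> sedge set \<Rightarrow> nat \<Rightarrow> nat set" where
  "comp_of n X v = {w \<in> {1..n}. (v, w) \<in> (adj X)\<^sup>*}"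

lemma comps_eq_image_comp_of: "comps n X = comp_of n X ` {1..n}"
  unfolding comps_def comp_of_def by auto

lemma sym_adj: "sym (adj X)"
  unfolding sym_def adj_def by (auto simp: insert_commute)

lemma comp_of_eq:
  assumes "w \<in> comp_of n X v"
  shows "comp_of n X w = comp_of n X v"
proof -
  have vw: "(v, w) \<in> (adj X)\<^sup>*" using assms by (simp add: comp_of_def)
  hence wv: "(w, v) \<in> (adj X)\<^sup>*"
    using sym_rtrancl[OF sym_adj] unfolding sym_def by blast
  show ?thesis unfolding comp_of_def using vw wv by (meson rtrancl_trans)
qed

lemma comps_disjoint:
  "C \<in> comps n X \<Longrightarrow> C' \<in> comps n X \<Longrightarrow> x \<in> C \<Longrightarrow> x \<in> C' \<Longrightarrow> C = C'"
  unfolding comps_eq_image_comp_of using comp_of_eq by (metis imageE)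

lemma comps_nonempty: "C \<in> comps n X \<Longrightarrow> C \<noteq> {}"
  unfolding comps_eq_image_comp_of comp_of_def by auto

lemma finite_comps: "finite (comps n X)"
  unfolding comps_eq_image_comp_of by simp

lemma comp_of_mono: "H \<subseteq> G \<Longrightarrow> comp_of n H v \<subseteq> comp_of n G v"
proof -
  assume "H \<subseteq> G"
  hence "adj H \<subseteq> adj G" unfolding adj_def by auto
  thus ?thesis unfolding comp_of_def using rtrancl_mono by blast
qed

lemma comps_refine:
  assumes "H \<subseteq> G" and "D \<in> comps n H"
  shows "\<exists>C \<in> comps n G. D \<subseteq> C"
proof -
  obtain v where "v \<in> {1..n}" and "D = comp_of n H v"
    using assms(2) unfolding comps_eq_image_comp_of by blast
  thus ?thesis using comp_of_mono[OF assms(1)] unfolding comps_eq_image_comp_of by blast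
qed

lemma signed_graph_edge_in_comp:
  assumes "signed_graph n G" and "(e, s) \<in> G"
  shows "\<exists>C \<in> comps n G. e \<subseteq> C"
proof -
  have e: "e \<subseteq> {1..n}" "card e = 1 \<or> card e = 2"
    using assms unfolding signed_graph_def by auto
  then obtain a b where ab: "e = {a, b}"
    by (auto simp: card_1_singleton_iff card_2_iff)
  have "(a, b) \<in> adj G" using assms(2) ab unfolding adj_def by auto
  hence "e \<subseteq> comp_of n G a" using ab e(1) unfolding comp_of_def by auto
  thus ?thesis using ab e(1) unfolding comps_eq_image_comp_of by blast
qed

lemma comp_is_comp_of_sym:
  "C \<in> comps n A \<Longrightarrow> comp_is_comp_of n A C B \<Longrightarrow> comp_is_comp_of n B C A"
  unfolding comp_is_comp_of_def by simp

lemma bip_comp_cong: "edges_in A C = edges_in B C \<Longrightarrow> bip_comp A C = bip_comp B C"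
  unfolding bip_comp_def is_bipartition_def by simp

text \<open>Within a component of \<open>G\<close> the walks of \<open>G\<close> only use edges lying in that component, so
  if none of them is deleted they are walks of \<open>H\<close>.\<close>

lemma comp_is_comp_of_iff_no_deleted_edge:
  assumes sg: "signed_graph n G" and HG: "H \<subseteq> G" and C: "C \<in> comps n G"
  shows "comp_is_comp_of n G C H \<longleftrightarrow> \<not> (\<exists>(e, s) \<in> G - H. e \<subseteq> C)"
proof
  assume "comp_is_comp_of n G C H"
  thus "\<not> (\<exists>(e, s) \<in> G - H. e \<subseteq> C)"
    unfolding comp_is_comp_of_def edges_in_def by blast
next
  assume no_deleted: "\<not> (\<exists>(e, s) \<in> G - H. e \<subseteq> C)"
  obtain v where v: "v \<in> {1..n}" "C = comp_of n G v"
    using C unfolding comps_eq_image_comp_of by blast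
  have "(v, w) \<in> (adj H)\<^sup>*" if "w \<in> C" for w
  proof -
    have "(v, w) \<in> (adj G)\<^sup>*" using that v unfolding comp_of_def by auto
    thus ?thesis
    proof (induction rule: rtrancl_induct)
      case (step x y)
      then obtain s where xy: "({x, y}, s) \<in> G" unfolding adj_def by blast
      hence "{x, y} \<subseteq> {1..n}" using sg unfolding signed_graph_def by auto
      hence "{x, y} \<subseteq> C"
        using step(1,2) v unfolding comp_of_def by (auto intro: rtrancl_into_rtrancl)
      hence "({x, y}, s) \<in> H" using xy no_deleted by blast
      hence "(x, y) \<in> adj H" unfolding adj_def by blast
      with step(3) show ?case by (rule rtrancl_into_rtrancl)
    qed simp
  qed
  hence "C = comp_of n H v" using comp_of_mono[OF HG, of n v] v unfolding comp_of_def by blast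
  hence "C \<in> comps n H" using v(1) unfolding comps_eq_image_comp_of by blast
  moreover have "edges_in H C = edges_in G C"
    using no_deleted HG unfolding edges_in_def by blast
  ultimately show "comp_is_comp_of n G C H" unfolding comp_is_comp_of_def by simp
qed

definition new_bip_comps :: "nat \<Rightarrow> sedge set \<Rightarrow> sedge set \<Rightarrow> nat set set" where
  "new_bip_comps n A B = {C \<in> comps n A. bip_comp A C \<and> \<not> comp_is_comp_of n A C B}"

lemma bicomp_add_card_new_bip_comps:
  "bicomp n A + card (new_bip_comps n B A) = bicomp n B + card (new_bip_comps n A B)"
proof -
  define common where "common A B = {C \<in> comps n A. bip_comp A C \<and> comp_is_comp_of n A C B}"
    for A B
  have common_sym: "common A B = common B A" for A B
    unfolding common_def comp_is_comp_of_def using bip_comp_cong by blast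
  have split: "bicomp n A = card (common A B) + card (new_bip_comps n A B)" for A B
  proof -
    have "{C \<in> comps n A. bip_comp A C} = common A B \<union> new_bip_comps n A B"
      unfolding common_def new_bip_comps_def by auto
    moreover have "finite (common A B)" "finite (new_bip_comps n A B)"
      unfolding common_def new_bip_comps_def using finite_comps by auto
    moreover have "common A B \<inter> new_bip_comps n A B = {}"
      unfolding common_def new_bip_comps_def by auto
    ultimately show ?thesis unfolding bicomp_def by (simp add: card_Un_disjoint)
  qed
  show ?thesis using split[of A B] split[of B A] common_sym[of A B] by simp
qed

lemma facet_card_new_bip_comps:
  "facet_subgraph n G H \<Longrightarrow> card (new_bip_comps n H G) = card (new_bip_comps n G H) + 1"
  using bicomp_add_card_new_bip_comps[of n H G] unfolding facet_subgraph_def by simp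

lemma facet_deleted_edge_meets_new_bip_comp:
  assumes "facet_subgraph n G H" and "D \<in> new_bip_comps n H G" and "(e, s) \<in> G - H"
  shows "e \<inter> D \<noteq> {}"
proof -
  obtain L R where "is_bipartition H D L R" and
    signs: "\<forall>(e, s) \<in> G - H. (s = 1 \<and> e \<inter> L \<noteq> {} \<and> e \<inter> R = {}) \<or>
              (s = -1 \<and> e \<inter> R \<noteq> {} \<and> e \<inter> L = {})"
    using assms(1,2) unfolding facet_subgraph_def new_bip_comps_def by blast
  hence "L \<union> R = D" unfolding is_bipartition_def by simp
  thus ?thesis using signs assms(3) by blast
qed

lemma new_comp_in_changed_comp:
  assumes "H \<subseteq> G" and D: "D \<in> comps n H" "\<not> comp_is_comp_of n H D G"
  shows "\<exists>C \<in> comps n G. D \<subseteq> C \<and> \<not> comp_is_comp_of n G C H"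
proof -
  obtain C where C: "C \<in> comps n G" "D \<subseteq> C" using comps_refine[OF assms(1) D(1)] by blast
  have "\<not> comp_is_comp_of n G C H"
  proof
    assume CH: "comp_is_comp_of n G C H"
    obtain x where "x \<in> D" using comps_nonempty[OF D(1)] by blast
    hence "D = C" using comps_disjoint[OF D(1)] CH C unfolding comp_is_comp_of_def by blast
    thus False using D(2) comp_is_comp_of_sym[OF C(1) CH] by simp
  qed
  thus ?thesis using C by blast
qed

lemma facet_changed_comp_unique:
  assumes sg: "signed_graph n G" and facet: "facet_subgraph n G H"
    and C: "C \<in> comps n G" "\<not> comp_is_comp_of n G C H"
    and C': "C' \<in> comps n G" "\<not> comp_is_comp_of n G C' H"
  shows "C = C'"
proof -
  have HG: "H \<subseteq> G" using facet unfolding facet_subgraph_def by simp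
  obtain D where D: "D \<in> new_bip_comps n H G" using facet_card_new_bip_comps[OF facet] by fastforce
  obtain K where K: "K \<in> comps n G" "D \<subseteq> K"
    using comps_refine[OF HG] D unfolding new_bip_comps_def by blast
  have "K' = K" if K': "K' \<in> comps n G" "\<not> comp_is_comp_of n G K' H" for K'
  proof -
    obtain e s where "(e, s) \<in> G - H" "e \<subseteq> K'"
      using comp_is_comp_of_iff_no_deleted_edge[OF sg HG K'(1)] K'(2) by blast
    hence "K' \<inter> K \<noteq> {}" using facet_deleted_edge_meets_new_bip_comp[OF facet D] K(2) by blast
    thus ?thesis using comps_disjoint[OF K'(1) K(1)] by blast
  qed
  thus ?thesis using C C' by blast
qed

lemma facet_ex1_changed_comp:
  assumes "signed_graph n G" and facet: "facet_subgraph n G H"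
  shows "\<exists>!C. C \<in> comps n G \<and> \<not> comp_is_comp_of n G C H"
proof -
  have HG: "H \<subseteq> G" using facet unfolding facet_subgraph_def by simp
  obtain D where "D \<in> new_bip_comps n H G" using facet_card_new_bip_comps[OF facet] by fastforce
  hence "\<exists>C \<in> comps n G. \<not> comp_is_comp_of n G C H"
    using new_comp_in_changed_comp[OF HG] unfolding new_bip_comps_def by blast
  thus ?thesis using facet_changed_comp_unique[OF assms] by blast
qed

lemma facet_deleted_edge_in_changed_comp:
  assumes sg: "signed_graph n G" and facet: "facet_subgraph n G H"
    and C1: "C1 \<in> comps n G" "\<not> comp_is_comp_of n G C1 H" and es: "(e, s) \<in> G - H"
  shows "e \<subseteq> C1"
proof -
  have HG: "H \<subseteq> G" using facet unfolding facet_subgraph_def by simp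
  obtain C where C: "C \<in> comps n G" "e \<subseteq> C" using signed_graph_edge_in_comp[OF sg] es by blast
  hence "\<not> comp_is_comp_of n G C H"
    using comp_is_comp_of_iff_no_deleted_edge[OF sg HG C(1)] es by blast
  thus ?thesis using facet_changed_comp_unique[OF sg facet C(1) _ C1] C(2) by simp
qed

lemma facet_new_bip_comps_subset:
  assumes sg: "signed_graph n G" and facet: "facet_subgraph n G H"
    and C1: "C1 \<in> comps n G" "\<not> comp_is_comp_of n G C1 H"
    and H12: "H1 \<in> comps n H" "H2 \<in> comps n H" "C1 = H1 \<union> H2"
  shows "new_bip_comps n H G \<subseteq> {H1, H2}" and "new_bip_comps n G H \<subseteq> {C1}"
proof
  have HG: "H \<subseteq> G" using facet unfolding facet_subgraph_def by simp
  fix D assume "D \<in> new_bip_comps n H G"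
  hence D: "D \<in> comps n H" "\<not> comp_is_comp_of n H D G" unfolding new_bip_comps_def by auto
  obtain C where "C \<in> comps n G" "D \<subseteq> C" "\<not> comp_is_comp_of n G C H"
    using new_comp_in_changed_comp[OF HG D] by blast
  hence "D \<subseteq> H1 \<union> H2" using facet_changed_comp_unique[OF sg facet _ _ C1] H12(3) by blast
  moreover obtain x where "x \<in> D" using comps_nonempty[OF D(1)] by blast
  ultimately show "D \<in> {H1, H2}" using comps_disjoint[OF D(1)] H12(1,2) by blast
next
  show "new_bip_comps n G H \<subseteq> {C1}"
    using facet_changed_comp_unique[OF sg facet _ _ C1] unfolding new_bip_comps_def by blast
qed

lemma facet_bip_comp_iff:
  assumes sg: "signed_graph n G" and facet: "facet_subgraph n G H"
    and C1: "C1 \<in> comps n G" "\<not> comp_is_comp_of n G C1 H"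
    and H12: "H1 \<in> comps n H" "H2 \<in> comps n H" "H1 \<noteq> H2" "C1 = H1 \<union> H2"
    and H1: "bip_comp H H1" "\<not> comp_is_comp_of n H H1 G"
  shows "bip_comp G C1 \<longleftrightarrow> bip_comp H H2"
proof -
  have H2_new: "\<not> comp_is_comp_of n H H2 G"
  proof
    assume "comp_is_comp_of n H H2 G"
    hence "H2 \<in> comps n G" unfolding comp_is_comp_of_def by simp
    hence "H2 = C1" using comps_disjoint[OF _ C1(1)] comps_nonempty[OF H12(2)] H12(4) by blast
    thus False using comps_disjoint[OF H12(1,2)] comps_nonempty[OF H12(1)] H12(3,4) by blast
  qed
  have X: "new_bip_comps n H G = (if bip_comp H H2 then {H1, H2} else {H1})"
    using facet_new_bip_comps_subset(1)[OF sg facet C1 H12(1,2,4)] H12 H1 H2_new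
    unfolding new_bip_comps_def by auto
  have Y: "new_bip_comps n G H = (if bip_comp G C1 then {C1} else {})"
    using facet_new_bip_comps_subset(2)[OF sg facet C1 H12(1,2,4)] C1
    unfolding new_bip_comps_def by auto
  show ?thesis using facet_card_new_bip_comps[OF facet] H12(3) unfolding X Y
    by (auto split: if_splits)
qed

theorem mainTheorem4:
  assumes "signed_graph n G"
    and "facet_subgraph n G H"
  shows "(\<exists>!C1. C1 \<in> comps n G \<and> \<not> comp_is_comp_of n G C1 H) \<and>
         (\<forall>C1 \<in> comps n G. \<not> comp_is_comp_of n G C1 H \<longrightarrow>
           (\<forall>(e, s) \<in> G - H. e \<subseteq> C1) \<and>
           (\<forall>H1 H2. H1 \<in> comps n H \<and> H2 \<in> comps n H \<and> H1 \<noteq> H2 \<and> C1 = H1 \<union> H2 \<and>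
              bip_comp H H1 \<and> \<not> comp_is_comp_of n H H1 G \<longrightarrow>
              (bip_comp G C1 \<longleftrightarrow> bip_comp H H2)))"
proof -
  have "(\<forall>(e, s) \<in> G - H. e \<subseteq> C1) \<and>
        (\<forall>H1 H2. H1 \<in> comps n H \<and> H2 \<in> comps n H \<and> H1 \<noteq> H2 \<and> C1 = H1 \<union> H2 \<and>
           bip_comp H H1 \<and> \<not> comp_is_comp_of n H H1 G \<longrightarrow>
           (bip_comp G C1 \<longleftrightarrow> bip_comp H H2))"
    if C1: "C1 \<in> comps n G" "\<not> comp_is_comp_of n G C1 H" for C1
    using facet_deleted_edge_in_changed_comp[OF assms C1] facet_bip_comp_iff[OF assms C1]
    by blast
  with facet_ex1_changed_comp[OF assms] show ?thesis by blast
qed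

end
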